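(* Let $d_{\mathbb Z}$ be a metric on $\mathbb Z$. For every $\lambda\in\mathbb R\setminus\{0\}$, the operator $D_\lambda=D_{\mathbb Z}+\lambda X$ on $\ell^2(\mathbb Z)\otimes\mathbb C^2$ is selfadjoint with compact resolvent.
   Context: Write $\delta_n=d_{\mathbb Z}(n,n-1)$. On $\ell^2(\mathbb Z)$, $(\nabla f)_n=\frac{f_n-f_{n-1}}{i\,\delta_n}$. On $\ell^2(\mathbb Z)\otimes\mathbb C^2$, $D_{\mathbb Z}=\begin{pmatrix}0&\nabla\\ \nabla^*&0\end{pmatrix}$, and $(Xf)_n=c_nc_{n+1}\sigma_3f_n$ with $\sigma_3=\mathrm{diag}(1,-1)$, where $(c_n)_{n\in\mathbb Z}$ is a real sequence with $c_n\to+\infty$ as $|n|\to\infty$ and $c_n\delta_n\ge1$ for all $n$. *)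

theory Defs
  imports "HOL-Analysis.Analysis"
begin

text \<open>Elements of l2(Z) (x) C^2 are represented as functions int => complex * complex.\<close>

type_synonym vec = "int \<Rightarrow> complex \<times> complex"

definition l2 :: "vec set" where
  "l2 = {f. (\<lambda>n. (cmod (fst (f n)))\<^sup>2 + (cmod (snd (f n)))\<^sup>2) summable_on UNIV}"

definition l2norm :: "vec \<Rightarrow> real" where
  "l2norm f = sqrt (\<Sum>\<^sub>\<infinity>n. (cmod (fst (f n)))\<^sup>2 + (cmod (snd (f n)))\<^sup>2)"

definition l2inner :: "vec \<Rightarrow> vec \<Rightarrow> complex" where
  "l2inner f g = (\<Sum>\<^sub>\<infinity>n. cnj (fst (f n)) * fst (g n) + cnj (snd (f n)) * snd (g n))"

definition vsub :: "vec \<Rightarrow> vec \<Rightarrow> vec" where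
  "vsub f g = (\<lambda>n. (fst (f n) - fst (g n), snd (f n) - snd (g n)))"

definition vscale :: "complex \<Rightarrow> vec \<Rightarrow> vec" where
  "vscale z f = (\<lambda>n. (z * fst (f n), z * snd (f n)))"

definition delta :: "(int \<Rightarrow> int \<Rightarrow> real) \<Rightarrow> int \<Rightarrow> real" where
  "delta d n = d n (n - 1)"

definition grad :: "(int \<Rightarrow> int \<Rightarrow> real) \<Rightarrow> (int \<Rightarrow> complex) \<Rightarrow> int \<Rightarrow> complex" where
  "grad d f n = (f n - f (n - 1)) / (\<i> * complex_of_real (delta d n))"

definition grad_adj :: "(int \<Rightarrow> int \<Rightarrow> real) \<Rightarrow> (int \<Rightarrow> complex) \<Rightarrow> int \<Rightarrow> complex" where
  "grad_adj d g n = \<i> * (g n / complex_of_real (delta d n) - g (n + 1) / complex_of_real (delta d (n + 1)))"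

text \<open>D_lambda = D_Z + lambda X acting (formally) on sequences,
  D_Z = [[0, nabla], [nabla^*, 0]], (X f)_n = c_n c_{n+1} sigma_3 f_n.\<close>
definition Dlam :: "(int \<Rightarrow> int \<Rightarrow> real) \<Rightarrow> (int \<Rightarrow> real) \<Rightarrow> real \<Rightarrow> vec \<Rightarrow> vec" where
  "Dlam d c lam f = (\<lambda>n.
     (grad d (\<lambda>m. snd (f m)) n + complex_of_real (lam * c n * c (n + 1)) * fst (f n),
      grad_adj d (\<lambda>m. fst (f m)) n - complex_of_real (lam * c n * c (n + 1)) * snd (f n)))"

definition Dlam_dom :: "(int \<Rightarrow> int \<Rightarrow> real) \<Rightarrow> (int \<Rightarrow> real) \<Rightarrow> real \<Rightarrow> vec set" where
  "Dlam_dom d c lam = {f \<in> l2. Dlam d c lam f \<in> l2}"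

text \<open>Selfadjointness of a densely defined operator (Dom, A) on l2: A = A^*,
  where dom A^* = {g | exists h in l2, for all f in Dom, <Af,g> = <f,h>} and A^* g = h.\<close>
definition selfadjoint_op :: "vec set \<Rightarrow> (vec \<Rightarrow> vec) \<Rightarrow> bool" where
  "selfadjoint_op Dom A \<longleftrightarrow>
     Dom \<subseteq> l2 \<and> (\<forall>f\<in>Dom. A f \<in> l2) \<and>
     (\<forall>g\<in>l2. \<forall>e>0. \<exists>f\<in>Dom. l2norm (vsub g f) < e) \<and>
     (\<forall>g\<in>l2. (\<exists>h\<in>l2. \<forall>f\<in>Dom. l2inner (A f) g = l2inner f h) \<longleftrightarrow> g \<in> Dom) \<and>
     (\<forall>f\<in>Dom. \<forall>g\<in>Dom. l2inner (A f) g = l2inner f (A g))"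

definition compact_l2op :: "(vec \<Rightarrow> vec) \<Rightarrow> bool" where
  "compact_l2op R \<longleftrightarrow> (\<forall>x :: nat \<Rightarrow> vec. (\<forall>k. x k \<in> l2) \<and> (\<exists>B. \<forall>k. l2norm (x k) \<le> B) \<longrightarrow>
      (\<exists>r u. strict_mono r \<and> u \<in> l2 \<and> (\<lambda>k. l2norm (vsub (R (x (r k))) u)) \<longlonglongrightarrow> 0))"

definition compact_resolvent :: "vec set \<Rightarrow> (vec \<Rightarrow> vec) \<Rightarrow> bool" where
  "compact_resolvent Dom A \<longleftrightarrow> (\<exists>z R.
     (\<forall>u\<in>l2. R u \<in> Dom \<and> vsub (A (R u)) (vscale z (R u)) = u) \<and>
     (\<forall>f\<in>Dom. R (vsub (A f) (vscale z f)) = f) \<and>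
     compact_l2op R)"

end

theory Submission
  imports Defs
begin

text \<open>Write \<open>Dlam = D\<^sub>Z + M\<close>, where \<open>M\<close> multiplies by \<open>mass\<^sub>n \<sigma>\<^sub>3\<close> with
  \<open>mass\<^sub>n = lam c\<^sub>n c\<^sub>n\<^sub>+\<^sub>1\<close>.  Since \<open>1 / \<delta>\<^sub>n \<le> c\<^sub>n\<close> while \<open>mass\<^sub>n\<close> grows like
  \<open>c\<^sub>n c\<^sub>n\<^sub>+\<^sub>1\<close>, for a large constant \<open>mu\<close> the weight
  \<open>\<rho>\<^sub>n = \<bar>mass\<^sub>n - \<i> mu\<bar> = sqrt (mass\<^sub>n\<^sup>2 + mu\<^sup>2)\<close> dominates \<open>8 / \<delta>\<^sub>n\<close> and
  \<open>8 / \<delta>\<^sub>n\<^sub>+\<^sub>1\<close>, so \<open>D\<^sub>Z\<close> is bounded relative to \<open>\<rho>\<close> with relative bound below 1.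
  Hence \<open>(Dlam - \<i> s) g = u\<close>, \<open>s = \<plusminus>mu\<close>, is solved by the contracting iteration
  \<open>g = (M - \<i> s)\<^sup>-\<^sup>1 (u - D\<^sub>Z g)\<close>, with a solution in the weighted space
  \<open>{g. \<rho> g \<in> l2}\<close>.  On that space \<open>Dlam\<close> is symmetric by summation by parts; together
  with the surjectivity of \<open>Dlam \<plusminus> \<i> mu\<close> this shows that the maximal domain is the weighted
  space and that the operator is selfadjoint.  Finally \<open>\<rho>\<^sub>n \<rightarrow> \<infinity>\<close> as \<open>|n| \<rightarrow> \<infinity>\<close>,
  so the weighted space embeds compactly into \<open>l2\<close> and the resolvent is compact.\<close>

section \<open>Sequences in \<open>l2\<close>\<close>

definition sqnorm :: "vec \<Rightarrow> int \<Rightarrow> real" where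
  "sqnorm f n = (cmod (fst (f n)))\<^sup>2 + (cmod (snd (f n)))\<^sup>2"

definition l2norm_sq :: "vec \<Rightarrow> real" where
  "l2norm_sq f = (\<Sum>\<^sub>\<infinity>n. sqnorm f n)"

lemma sqnorm_eq_norm: "sqnorm f n = (norm (f n))\<^sup>2"
  by (cases "f n") (simp add: sqnorm_def norm_Pair)

lemma sqnorm_nonneg [simp]: "0 \<le> sqnorm f n"
  by (simp add: sqnorm_def)

lemma l2_iff_sqnorm_summable: "f \<in> l2 \<longleftrightarrow> sqnorm f summable_on UNIV"
  by (simp add: l2_def sqnorm_def[abs_def])

lemma l2norm_eq_sqrt: "l2norm f = sqrt (l2norm_sq f)"
  by (simp add: l2norm_def l2norm_sq_def sqnorm_def)

lemma l2norm_sq_nonneg: "0 \<le> l2norm_sq f"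
  unfolding l2norm_sq_def by (rule infsum_nonneg) simp

lemma vsub_apply: "vsub f g n = f n - g n"
  by (simp add: vsub_def prod_eq_iff)

lemma norm_fst_le_norm: "norm (fst x) \<le> norm x"
  by (metis norm_fst_le prod.collapse)

lemma norm_snd_le_norm: "norm (snd x) \<le> norm x"
  by (metis norm_snd_le prod.collapse)

lemma power2_norm_diff_le:
  fixes x y :: "'a::real_normed_vector"
  shows "(norm (x - y))\<^sup>2 \<le> 2 * (norm x)\<^sup>2 + 2 * (norm y)\<^sup>2"
proof -
  have "(norm (x - y))\<^sup>2 \<le> (norm x + norm y)\<^sup>2"
    by (rule power_mono[OF norm_triangle_ineq4 norm_ge_zero])
  also have "\<dots> \<le> 2 * (norm x)\<^sup>2 + 2 * (norm y)\<^sup>2"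
    using sum_squares_bound[of "norm x" "norm y"] by (simp add: power2_sum)
  finally show ?thesis .
qed

lemma power2_norm_add_le:
  fixes x y :: "'a::real_normed_vector"
  shows "(norm (x + y))\<^sup>2 \<le> 2 * (norm x)\<^sup>2 + 2 * (norm y)\<^sup>2"
  using power2_norm_diff_le[of x "- y"] by simp

lemma summable_on_shift_int:
  fixes g :: "int \<Rightarrow> 'a::{comm_monoid_add,topological_space}"
  shows "(\<lambda>n. g (n + k)) summable_on UNIV \<longleftrightarrow> g summable_on UNIV"
proof -
  have "inj (\<lambda>n::int. n + k)" and "range (\<lambda>n::int. n + k) = UNIV"
    by (auto simp: inj_on_def intro: image_eqI[where x = "_ - k"])
  then show ?thesis
    using summable_on_reindex[of "\<lambda>n. n + k" UNIV g] by (simp add: o_def)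
qed

lemma infsum_shift_int:
  fixes g :: "int \<Rightarrow> 'a::{comm_monoid_add,t2_space}"
  shows "(\<Sum>\<^sub>\<infinity>n. g (n + k)) = (\<Sum>\<^sub>\<infinity>n. g n)"
proof -
  have "inj (\<lambda>n::int. n + k)" and "range (\<lambda>n::int. n + k) = UNIV"
    by (auto simp: inj_on_def intro: image_eqI[where x = "_ - k"])
  then show ?thesis
    using infsum_reindex[of "\<lambda>n. n + k" UNIV g] by (simp add: o_def)
qed

lemma infsum_add_shifted:
  fixes a b :: "int \<Rightarrow> 'a::{topological_comm_monoid_add,t2_space}"
  assumes a: "a summable_on UNIV" and b: "b summable_on UNIV"
  shows "(\<lambda>n. a n + b (n + k)) summable_on UNIV"
    and "(\<Sum>\<^sub>\<infinity>n. a n + b (n + k)) = (\<Sum>\<^sub>\<infinity>n. a n + b n)"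
proof -
  have b': "(\<lambda>n. b (n + k)) summable_on UNIV" using b summable_on_shift_int by blast
  show "(\<lambda>n. a n + b (n + k)) summable_on UNIV" by (rule summable_on_add[OF a b'])
  show "(\<Sum>\<^sub>\<infinity>n. a n + b (n + k)) = (\<Sum>\<^sub>\<infinity>n. a n + b n)"
    by (simp add: infsum_add a b b' infsum_shift_int)
qed

lemma summable_on_neighbours:
  fixes g :: "int \<Rightarrow> real"
  assumes "g summable_on UNIV"
  shows "(\<lambda>n. g n + g (n - 1) + g (n + 1)) summable_on UNIV"
    and "(\<Sum>\<^sub>\<infinity>n. g n + g (n - 1) + g (n + 1)) = 3 * (\<Sum>\<^sub>\<infinity>n. g n)"
proof -
  have l: "(\<lambda>n. g (n - 1)) summable_on UNIV" and r: "(\<lambda>n. g (n + 1)) summable_on UNIV"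
    using assms summable_on_shift_int[of g "-1"] summable_on_shift_int[of g 1] by simp_all
  show "(\<lambda>n. g n + g (n - 1) + g (n + 1)) summable_on UNIV"
    by (intro summable_on_add assms l r)
  have "(\<Sum>\<^sub>\<infinity>n. g n + g (n - 1) + g (n + 1))
      = (\<Sum>\<^sub>\<infinity>n. g n) + (\<Sum>\<^sub>\<infinity>n. g (n - 1)) + (\<Sum>\<^sub>\<infinity>n. g (n + 1))"
    by (simp add: infsum_add summable_on_add assms l r)
  also have "\<dots> = 3 * (\<Sum>\<^sub>\<infinity>n. g n)"
    using infsum_shift_int[of g "-1"] infsum_shift_int[of g 1] by simp
  finally show "(\<Sum>\<^sub>\<infinity>n. g n + g (n - 1) + g (n + 1)) = 3 * (\<Sum>\<^sub>\<infinity>n. g n)" .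
qed

lemma summable_on_product_bound:
  fixes t :: "int \<Rightarrow> complex"
  assumes "A summable_on UNIV" "B summable_on UNIV"
    and "\<And>n. norm (t n) \<le> X n * Y n" "\<And>n. (X n)\<^sup>2 \<le> A n" "\<And>n. (Y n)\<^sup>2 \<le> B n"
  shows "t summable_on UNIV"
proof -
  have "(\<lambda>n. norm (t n)) summable_on UNIV"
  proof (rule summable_on_comparison_test)
    show "(\<lambda>n. (A n + B n) / 2) summable_on UNIV"
      using summable_on_cmult_right[OF summable_on_add[OF assms(1,2)], of "1/2"] by simp
    show "norm (t n) \<le> (A n + B n) / 2" for n
    proof -
      have "2 * (X n * Y n) \<le> (X n)\<^sup>2 + (Y n)\<^sup>2"
        using sum_squares_bound[of "X n" "Y n"] by (simp add: mult.assoc)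
      then show ?thesis using assms(3-5)[of n] unfolding add_divide_distrib by linarith
    qed
  qed simp
  then show ?thesis using summable_on_iff_abs_summable_on_complex by blast
qed

lemma summable_on_finite_support:
  fixes a :: "int \<Rightarrow> 'a::{comm_monoid_add,topological_space}"
  assumes "finite F" "\<And>n. n \<notin> F \<Longrightarrow> a n = 0"
  shows "a summable_on UNIV"
proof -
  have "a summable_on UNIV \<longleftrightarrow> a summable_on F"
    by (rule summable_on_cong_neutral) (use assms in auto)
  then show ?thesis using assms by simp
qed

lemma infsum_finite_support:
  fixes a :: "int \<Rightarrow> 'a::{comm_monoid_add,t2_space}"
  assumes "finite F"
  shows "(\<Sum>\<^sub>\<infinity>n. if n \<in> F then a n else 0) = sum a F"
proof -
  have "(\<Sum>\<^sub>\<infinity>n. if n \<in> F then a n else 0) = infsum a F"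
    by (rule infsum_cong_neutral) auto
  then show ?thesis using assms by simp
qed

lemma pointwise_convergent_subseq:
  fixes x :: "nat \<Rightarrow> int \<Rightarrow> complex \<times> complex"
  assumes "\<And>k n. norm (x k n) \<le> B n"
  shows "\<exists>r g. strict_mono r \<and> (\<forall>n. (\<lambda>k. x (r k) n) \<longlonglongrightarrow> g n)"
proof -
  let ?K = "PiE UNIV (\<lambda>n::int. cball (0::complex \<times> complex) (B n))"
  have "compactin (product_topology (\<lambda>_. euclidean) UNIV) ?K"
    by (simp add: compactin_PiE compact_cball)
  then have "seq_compact ?K"
    by (metis compact_imp_seq_compact compactin_euclidean_iff euclidean_product_topology)
  moreover have "\<forall>k. x k \<in> ?K" using assms by (auto simp: PiE_def)
  ultimately obtain g r where "strict_mono r" "(x \<circ> r) \<longlonglongrightarrow> g"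
    unfolding seq_compact_def by metis
  moreover have "(\<lambda>k. x (r k) n) \<longlonglongrightarrow> g n" for n
    using continuous_on_tendsto_compose[OF continuous_on_product_coordinates[of n] \<open>(x \<circ> r) \<longlonglongrightarrow> g\<close>]
    by (simp add: o_def)
  ultimately show ?thesis by blast
qed

lemma l2_vsub:
  assumes "f \<in> l2" "g \<in> l2"
  shows "vsub f g \<in> l2"
proof -
  have "(\<lambda>n. 2 * sqnorm f n + 2 * sqnorm g n) summable_on UNIV"
    using assms by (intro summable_on_add summable_on_cmult_right) (auto simp: l2_iff_sqnorm_summable)
  then show ?thesis
    unfolding l2_iff_sqnorm_summable
    by (rule summable_on_comparison_test) (simp_all add: sqnorm_eq_norm vsub_apply power2_norm_diff_le)
qed

lemma l2_vscale: "f \<in> l2 \<Longrightarrow> vscale z f \<in> l2"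
proof -
  have "sqnorm (vscale z f) = (\<lambda>n. (cmod z)\<^sup>2 * sqnorm f n)"
    by (simp add: fun_eq_iff sqnorm_def vscale_def norm_mult power_mult_distrib algebra_simps)
  then show "f \<in> l2 \<Longrightarrow> vscale z f \<in> l2"
    by (simp add: l2_iff_sqnorm_summable summable_on_cmult_right)
qed

lemma l2_shift: "f \<in> l2 \<Longrightarrow> (\<lambda>n. f (n + k)) \<in> l2"
  using summable_on_shift_int[of "sqnorm f" k]
  by (simp add: l2_iff_sqnorm_summable sqnorm_def[abs_def])

lemma summable_l2inner:
  assumes "f \<in> l2" "g \<in> l2"
  shows "(\<lambda>n. cnj (fst (f n)) * fst (g n) + cnj (snd (f n)) * snd (g n)) summable_on UNIV"
proof -
  have sf: "sqnorm f summable_on UNIV" and sg: "sqnorm g summable_on UNIV"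
    using assms by (auto simp: l2_iff_sqnorm_summable)
  have "(\<lambda>n. cnj (fst (f n)) * fst (g n)) summable_on UNIV"
    by (rule summable_on_product_bound[OF sf sg, where X = "\<lambda>n. cmod (fst (f n))"
          and Y = "\<lambda>n. cmod (fst (g n))"]) (auto simp: norm_mult sqnorm_def)
  moreover have "(\<lambda>n. cnj (snd (f n)) * snd (g n)) summable_on UNIV"
    by (rule summable_on_product_bound[OF sf sg, where X = "\<lambda>n. cmod (snd (f n))"
          and Y = "\<lambda>n. cmod (snd (g n))"]) (auto simp: norm_mult sqnorm_def)
  ultimately show ?thesis by (rule summable_on_add)
qed

lemma l2inner_self:
  assumes "h \<in> l2"
  shows "l2inner h h = complex_of_real (l2norm_sq h)"
proof -
  have "l2inner h h = (\<Sum>\<^sub>\<infinity>n. complex_of_real (sqnorm h n))"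
    unfolding l2inner_def sqnorm_def
    by (rule infsum_cong) (simp only: of_real_add complex_norm_square, simp add: ac_simps)
  also have "\<dots> = complex_of_real (l2norm_sq h)"
    using assms unfolding l2norm_sq_def l2_iff_sqnorm_summable
    by (intro infsumI has_sum_of_real has_sum_infsum)
  finally show ?thesis .
qed

lemma l2inner_unit_fst: "l2inner (\<lambda>m. if m = n then (1, 0) else (0, 0)) f = fst (f n)"
proof -
  have "l2inner (\<lambda>m. if m = n then (1, 0) else (0, 0)) f = (\<Sum>\<^sub>\<infinity>m. if m \<in> {n} then fst (f m) else 0)"
    unfolding l2inner_def by (rule infsum_cong) simp
  then show ?thesis using infsum_finite_support[of "{n}" "\<lambda>m. fst (f m)"] by simp
qed

lemma l2inner_unit_snd: "l2inner (\<lambda>m. if m = n then (0, 1) else (0, 0)) f = snd (f n)"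
proof -
  have "l2inner (\<lambda>m. if m = n then (0, 1) else (0, 0)) f = (\<Sum>\<^sub>\<infinity>m. if m \<in> {n} then snd (f m) else 0)"
    unfolding l2inner_def by (rule infsum_cong) simp
  then show ?thesis using infsum_finite_support[of "{n}" "\<lambda>m. snd (f m)"] by simp
qed

lemma grad_summation_by_parts:
  fixes v h :: "int \<Rightarrow> complex"
  assumes a: "(\<lambda>n. cnj (v n) * h n / complex_of_real (delta d n)) summable_on UNIV"
    and b: "(\<lambda>n. cnj (v n) * h (n + 1) / complex_of_real (delta d (n + 1))) summable_on UNIV"
  shows "(\<lambda>n. cnj (grad d v n) * h n) summable_on UNIV"
    and "(\<lambda>n. cnj (v n) * grad_adj d h n) summable_on UNIV"
    and "(\<Sum>\<^sub>\<infinity>n. cnj (grad d v n) * h n) = (\<Sum>\<^sub>\<infinity>n. cnj (v n) * grad_adj d h n)"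
proof -
  define A where "A n = \<i> * (cnj (v n) * h n / complex_of_real (delta d n))" for n
  define B where "B n = - \<i> * (cnj (v n) * h (n + 1) / complex_of_real (delta d (n + 1)))" for n
  have sA: "A summable_on UNIV" and sB: "B summable_on UNIV"
    unfolding A_def B_def by (intro summable_on_cmult_right a b)+
  have lhs: "cnj (grad d v n) * h n = A n + B (n + - 1)" for n
    by (cases "delta d n = 0") (simp_all add: A_def B_def grad_def field_simps)
  have rhs: "cnj (v n) * grad_adj d h n = A n + B n" for n
    by (simp add: A_def B_def grad_adj_def field_simps)
  show "(\<lambda>n. cnj (grad d v n) * h n) summable_on UNIV"
    unfolding lhs by (rule infsum_add_shifted(1)[OF sA sB])
  show "(\<lambda>n. cnj (v n) * grad_adj d h n) summable_on UNIV"
    unfolding rhs by (rule summable_on_add[OF sA sB])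
  show "(\<Sum>\<^sub>\<infinity>n. cnj (grad d v n) * h n) = (\<Sum>\<^sub>\<infinity>n. cnj (v n) * grad_adj d h n)"
    unfolding lhs rhs by (rule infsum_add_shifted(2)[OF sA sB])
qed

lemma grad_adj_summation_by_parts:
  fixes u h :: "int \<Rightarrow> complex"
  assumes a: "(\<lambda>n. cnj (u n) * h n / complex_of_real (delta d n)) summable_on UNIV"
    and b: "(\<lambda>n. cnj (u n) * h (n - 1) / complex_of_real (delta d n)) summable_on UNIV"
  shows "(\<lambda>n. cnj (grad_adj d u n) * h n) summable_on UNIV"
    and "(\<lambda>n. cnj (u n) * grad d h n) summable_on UNIV"
    and "(\<Sum>\<^sub>\<infinity>n. cnj (grad_adj d u n) * h n) = (\<Sum>\<^sub>\<infinity>n. cnj (u n) * grad d h n)"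
proof -
  define A where "A n = - \<i> * (cnj (u n) * h n / complex_of_real (delta d n))" for n
  define B where "B n = \<i> * (cnj (u n) * h (n - 1) / complex_of_real (delta d n))" for n
  have sA: "A summable_on UNIV" and sB: "B summable_on UNIV"
    unfolding A_def B_def by (intro summable_on_cmult_right a b)+
  have lhs: "cnj (grad_adj d u n) * h n = A n + B (n + 1)" for n
    by (simp add: A_def B_def grad_adj_def field_simps)
  have rhs: "cnj (u n) * grad d h n = A n + B n" for n
    by (cases "delta d n = 0") (simp_all add: A_def B_def grad_def field_simps)
  show "(\<lambda>n. cnj (grad_adj d u n) * h n) summable_on UNIV"
    unfolding lhs by (rule infsum_add_shifted(1)[OF sA sB])
  show "(\<lambda>n. cnj (u n) * grad d h n) summable_on UNIV"
    unfolding rhs by (rule summable_on_add[OF sA sB])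
  show "(\<Sum>\<^sub>\<infinity>n. cnj (grad_adj d u n) * h n) = (\<Sum>\<^sub>\<infinity>n. cnj (u n) * grad d h n)"
    unfolding lhs rhs by (rule infsum_add_shifted(2)[OF sA sB])
qed

lemma delta_pos_of_metric:
  assumes eq: "\<And>x y. d x y = 0 \<longleftrightarrow> x = y"
    and sym: "\<And>x y. d x y = d y x"
    and tri: "\<And>x y z. d x z \<le> d x y + d y z"
  shows "delta d n > 0"
proof -
  have "0 \<le> d n (n - 1)"
    using tri[of n n "n - 1"] sym[of n "n - 1"] eq[of n n] by linarith
  moreover have "d n (n - 1) \<noteq> 0" using eq[of n "n - 1"] by simp
  ultimately show ?thesis by (simp add: delta_def)
qed

lemma finite_sublevel_int:
  fixes c :: "int \<Rightarrow> real"
  assumes "filterlim c at_top at_top" "filterlim c at_top at_bot"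
  shows "finite {n. c n < T}"
proof -
  obtain N1 where N1: "\<And>n. n \<ge> N1 \<Longrightarrow> T \<le> c n"
    using assms(1) unfolding filterlim_at_top eventually_at_top_linorder by blast
  obtain N2 where N2: "\<And>n. n \<le> N2 \<Longrightarrow> T \<le> c n"
    using assms(2) unfolding filterlim_at_top eventually_at_bot_linorder by blast
  have "{n. c n < T} \<subseteq> {N2..N1}"
  proof
    fix n assume "n \<in> {n. c n < T}"
    then have "\<not> N1 \<le> n" "\<not> n \<le> N2" using N1 N2 by force+
    then show "n \<in> {N2..N1}" by simp
  qed
  then show ?thesis by (rule finite_subset) simp
qed

section \<open>The weight\<close>

locale dirac_setting =
  fixes d :: "int \<Rightarrow> int \<Rightarrow> real" and c :: "int \<Rightarrow> real" and lam :: real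
  assumes delta_pos: "\<And>n. delta d n > 0"
    and c_delta: "\<And>n. c n * delta d n \<ge> 1"
    and finite_c_less: "\<And>T. finite {n. c n < T}"
    and lam_nonzero: "lam \<noteq> 0"
begin

lemma c_pos: "c n > 0"
  using c_delta[of n] delta_pos[of n] by (metis mult_nonpos_nonneg not_less not_one_le_zero order.trans less_imp_le)

lemma inverse_delta_le_c: "1 / delta d n \<le> c n"
  using c_delta[of n] delta_pos[of n] by (simp add: divide_le_eq mult.commute)

lemma finite_c_succ_less: "finite {n. c (n + 1) < T}"
proof -
  have "{n. c (n + 1) < T} = (\<lambda>n. n + 1) -` {n. c n < T}" by auto
  then show ?thesis using finite_vimageI[OF finite_c_less, of "\<lambda>n. n + 1"] by (simp add: inj_on_def)
qed

definition mass :: "int \<Rightarrow> real" where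
  "mass n = lam * c n * c (n + 1)"

lemma Dlam_apply:
  "Dlam d c lam f n =
     (grad d (\<lambda>m. snd (f m)) n + complex_of_real (mass n) * fst (f n),
      grad_adj d (\<lambda>m. fst (f m)) n - complex_of_real (mass n) * snd (f n))"
  by (simp add: Dlam_def mass_def)

text \<open>\<open>\<bar>mass\<^sub>n\<bar> = \<bar>lam\<bar> c\<^sub>n c\<^sub>n\<^sub>+\<^sub>1\<close> dominates \<open>8 c\<^sub>n\<close> and \<open>8 c\<^sub>n\<^sub>+\<^sub>1\<close> outside the finite
  set where \<open>c\<^sub>n\<close> or \<open>c\<^sub>n\<^sub>+\<^sub>1\<close> is below \<open>8 / \<bar>lam\<bar>\<close>; \<open>mu\<close> takes care of that set.\<close>
definition mu :: real where
  "mu = 8 * (\<Sum>n \<in> {n. c n < 8 / \<bar>lam\<bar>} \<union> {n. c (n + 1) < 8 / \<bar>lam\<bar>}. c n + c (n + 1)) + 1"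

definition weight :: "int \<Rightarrow> real" where
  "weight n = sqrt ((mass n)\<^sup>2 + mu\<^sup>2)"

lemma mu_pos: "mu > 0"
proof -
  have "0 \<le> (\<Sum>n \<in> {n. c n < 8 / \<bar>lam\<bar>} \<union> {n. c (n + 1) < 8 / \<bar>lam\<bar>}. c n + c (n + 1))"
    by (intro sum_nonneg add_nonneg_nonneg less_imp_le c_pos)
  then show ?thesis by (simp add: mu_def)
qed

lemma mu_le_weight: "mu \<le> weight n"
  using mu_pos by (simp add: weight_def real_le_rsqrt)

lemma weight_pos: "weight n > 0"
  using mu_le_weight[of n] mu_pos by linarith

lemma abs_mass_le_weight: "\<bar>mass n\<bar> \<le> weight n"
  by (simp add: weight_def real_le_rsqrt)

lemma c_le_weight: "8 * c n \<le> weight n \<and> 8 * c (n + 1) \<le> weight n"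
proof -
  define T where "T = 8 / \<bar>lam\<bar>"
  define S where "S = {n. c n < T} \<union> {n. c (n + 1) < T}"
  show ?thesis
  proof (cases "n \<in> S")
    case True
    have "finite S" unfolding S_def using finite_c_less finite_c_succ_less by simp
    with True have "c n + c (n + 1) \<le> (\<Sum>n\<in>S. c n + c (n + 1))"
      by (intro member_le_sum add_nonneg_nonneg less_imp_le c_pos)
    then show ?thesis
      using mu_le_weight[of n] c_pos[of n] c_pos[of "n + 1"] unfolding mu_def S_def T_def by linarith
  next
    case False
    then have T: "T \<le> c n" "T \<le> c (n + 1)" by (auto simp: S_def)
    have lam_T: "\<bar>lam\<bar> * T = 8" using lam_nonzero by (simp add: T_def)
    have mass: "\<bar>mass n\<bar> = \<bar>lam\<bar> * c n * c (n + 1)"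
      using c_pos[of n] c_pos[of "n + 1"] by (simp add: mass_def abs_mult)
    have "8 * c n = \<bar>lam\<bar> * T * c n" using lam_T by simp
    also have "\<dots> \<le> \<bar>lam\<bar> * c (n + 1) * c n"
      using T c_pos[of n] by (simp add: mult_right_mono mult_left_mono)
    finally have "8 * c n \<le> \<bar>mass n\<bar>" using mass by (simp add: mult_ac)
    moreover have "8 * c (n + 1) = \<bar>lam\<bar> * T * c (n + 1)" using lam_T by simp
    moreover have "\<dots> \<le> \<bar>lam\<bar> * c n * c (n + 1)"
      using T c_pos[of "n + 1"] by (simp add: mult_right_mono mult_left_mono)
    ultimately show ?thesis using abs_mass_le_weight[of n] mass by linarith
  qed
qed

lemma div_delta_le_weight:
  assumes "0 \<le> x"
  shows "x / delta d n \<le> weight n * x / 8" and "x / delta d (n + 1) \<le> weight n * x / 8"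
proof -
  have "8 / delta d n \<le> weight n" "8 / delta d (n + 1) \<le> weight n"
    using inverse_delta_le_c[of n] inverse_delta_le_c[of "n + 1"] c_le_weight[of n] by simp_all
  then have "x * (8 / delta d n) \<le> x * weight n" "x * (8 / delta d (n + 1)) \<le> x * weight n"
    by (simp_all only: mult_left_mono assms)
  then show "x / delta d n \<le> weight n * x / 8" "x / delta d (n + 1) \<le> weight n * x / 8"
    using delta_pos[of n] delta_pos[of "n + 1"] by (simp_all add: field_simps)
qed

definition weighted_sqnorm :: "vec \<Rightarrow> int \<Rightarrow> real" where
  "weighted_sqnorm f n = (weight n)\<^sup>2 * sqnorm f n"

definition weighted_l2 :: "vec set" where
  "weighted_l2 = {f. weighted_sqnorm f summable_on UNIV}"

lemma weighted_sqnorm_nonneg [simp]: "0 \<le> weighted_sqnorm f n"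
  by (simp add: weighted_sqnorm_def)

lemma sqnorm_le_weighted: "mu\<^sup>2 * sqnorm f n \<le> weighted_sqnorm f n"
  unfolding weighted_sqnorm_def using mu_le_weight[of n] mu_pos
  by (intro mult_right_mono power_mono) auto

lemma weighted_sqnorm_eq:
  "weighted_sqnorm f n = (weight n * cmod (fst (f n)))\<^sup>2 + (weight n * cmod (snd (f n)))\<^sup>2"
  by (simp add: weighted_sqnorm_def sqnorm_def power_mult_distrib algebra_simps)

lemma weighted_l2_subset_l2: "f \<in> weighted_l2 \<Longrightarrow> f \<in> l2"
  unfolding l2_iff_sqnorm_summable weighted_l2_def mem_Collect_eq
proof (rule summable_on_comparison_test)
  assume "weighted_sqnorm f summable_on UNIV"
  then show "(\<lambda>n. weighted_sqnorm f n / mu\<^sup>2) summable_on UNIV"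
    using summable_on_cmult_right[of "weighted_sqnorm f" UNIV "1 / mu\<^sup>2"] by simp
  show "sqnorm f n \<le> weighted_sqnorm f n / mu\<^sup>2" for n
    using sqnorm_le_weighted[of f n] mu_pos by (simp add: le_divide_eq mult.commute)
qed simp

lemma norm_le_weighted_bound:
  assumes "f \<in> weighted_l2" "(\<Sum>\<^sub>\<infinity>n. weighted_sqnorm f n) \<le> M"
  shows "norm (f n) \<le> sqrt (M / mu\<^sup>2)"
proof -
  have "mu\<^sup>2 * sqnorm f n \<le> weighted_sqnorm f n" by (rule sqnorm_le_weighted)
  also have "\<dots> \<le> (\<Sum>\<^sub>\<infinity>n. weighted_sqnorm f n)"
    using finite_sum_le_infsum[of "weighted_sqnorm f" UNIV "{n}"] assms(1)
    by (simp add: weighted_l2_def)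
  also have "\<dots> \<le> M" by (rule assms(2))
  finally have "sqnorm f n \<le> M / mu\<^sup>2" using mu_pos by (simp add: le_divide_eq mult.commute)
  then show ?thesis by (simp add: sqnorm_eq_norm real_le_rsqrt)
qed

lemma weighted_sqnorm_diff_le: "weighted_sqnorm (vsub f g) n \<le> 2 * weighted_sqnorm f n + 2 * weighted_sqnorm g n"
proof -
  have "sqnorm (vsub f g) n \<le> 2 * sqnorm f n + 2 * sqnorm g n"
    unfolding sqnorm_eq_norm vsub_apply by (rule power2_norm_diff_le)
  then have "(weight n)\<^sup>2 * sqnorm (vsub f g) n \<le> (weight n)\<^sup>2 * (2 * sqnorm f n + 2 * sqnorm g n)"
    by (intro mult_left_mono) auto
  then show ?thesis by (simp add: weighted_sqnorm_def algebra_simps)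
qed

lemma weighted_l2_vsub:
  assumes "f \<in> weighted_l2" "g \<in> weighted_l2"
  shows "vsub f g \<in> weighted_l2"
proof -
  have "(\<lambda>n. 2 * weighted_sqnorm f n + 2 * weighted_sqnorm g n) summable_on UNIV"
    using assms by (intro summable_on_add summable_on_cmult_right) (auto simp: weighted_l2_def)
  then show ?thesis
    unfolding weighted_l2_def mem_Collect_eq
    by (rule summable_on_comparison_test) (simp_all add: weighted_sqnorm_diff_le)
qed

lemma infsum_weighted_sqnorm_vsub_le:
  assumes f: "f \<in> weighted_l2" and g: "g \<in> weighted_l2"
  shows "(\<Sum>\<^sub>\<infinity>n. weighted_sqnorm (vsub f g) n)
    \<le> 2 * (\<Sum>\<^sub>\<infinity>n. weighted_sqnorm f n) + 2 * (\<Sum>\<^sub>\<infinity>n. weighted_sqnorm g n)"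
proof -
  have sf: "weighted_sqnorm f summable_on UNIV" and sg: "weighted_sqnorm g summable_on UNIV"
    using f g by (auto simp: weighted_l2_def)
  have "(\<Sum>\<^sub>\<infinity>n. weighted_sqnorm (vsub f g) n)
      \<le> (\<Sum>\<^sub>\<infinity>n. 2 * weighted_sqnorm f n + 2 * weighted_sqnorm g n)"
    using weighted_l2_vsub[OF f g] unfolding weighted_l2_def
    by (intro infsum_mono summable_on_add summable_on_cmult_right sf sg weighted_sqnorm_diff_le) simp
  also have "\<dots> = 2 * (\<Sum>\<^sub>\<infinity>n. weighted_sqnorm f n) + 2 * (\<Sum>\<^sub>\<infinity>n. weighted_sqnorm g n)"
    by (simp add: infsum_add infsum_cmult_right summable_on_cmult_right sf sg)
  finally show ?thesis .
qed

lemma weighted_l2_finite_support: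
  assumes "finite F" "\<And>n. n \<notin> F \<Longrightarrow> f n = (0, 0)"
  shows "f \<in> weighted_l2"
  unfolding weighted_l2_def mem_Collect_eq
  by (rule summable_on_finite_support[OF assms(1)]) (simp add: assms(2) weighted_sqnorm_def sqnorm_def)

lemma summable_on_weighted_product:
  fixes t :: "int \<Rightarrow> complex"
  assumes "f \<in> weighted_l2" "h \<in> l2" "\<And>n. norm (t n) \<le> weight n * norm (f n) * norm (h n)"
  shows "t summable_on UNIV"
proof (rule summable_on_product_bound)
  show "weighted_sqnorm f summable_on UNIV" using assms(1) by (simp add: weighted_l2_def)
  show "sqnorm h summable_on UNIV" using assms(2) by (simp add: l2_iff_sqnorm_summable)
  show "norm (t n) \<le> (weight n * norm (f n)) * norm (h n)" for n using assms(3) by simp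
  show "(weight n * norm (f n))\<^sup>2 \<le> weighted_sqnorm f n" for n
    by (simp add: weighted_sqnorm_def sqnorm_eq_norm power_mult_distrib)
  show "(norm (h n))\<^sup>2 \<le> sqnorm h n" for n by (simp add: sqnorm_eq_norm)
qed

lemma summable_on_div_delta:
  assumes "f \<in> weighted_l2" "h \<in> l2" "\<And>n. norm (x n) \<le> norm (f n)" "\<And>n. norm (y n) \<le> norm (h n)"
  shows "(\<lambda>n. x n * y n / complex_of_real (delta d n)) summable_on UNIV"
    and "(\<lambda>n. x n * y n / complex_of_real (delta d (n + 1))) summable_on UNIV"
proof -
  have bound: "norm (x n * y n / complex_of_real (delta d k)) \<le> weight n * norm (f n) * norm (h n)"
    if "norm (x n * y n) / delta d k \<le> weight n * norm (x n * y n) / 8" for n k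
  proof -
    have "norm (x n * y n / complex_of_real (delta d k)) = norm (x n * y n) / delta d k"
      using delta_pos[of k] by (simp add: norm_divide)
    also have "\<dots> \<le> weight n * norm (x n * y n)"
      using that mult_nonneg_nonneg[OF less_imp_le[OF weight_pos] norm_ge_zero, of n "x n * y n"]
      by linarith
    also have "\<dots> \<le> weight n * (norm (f n) * norm (h n))"
      using assms(3,4)[of n] weight_pos[of n] by (simp add: norm_mult mult_mono)
    finally show ?thesis by (simp add: mult.assoc)
  qed
  show "(\<lambda>n. x n * y n / complex_of_real (delta d n)) summable_on UNIV"
    and "(\<lambda>n. x n * y n / complex_of_real (delta d (n + 1))) summable_on UNIV"
    by (auto intro!: summable_on_weighted_product[OF assms(1,2)] bound div_delta_le_weight)
qed

lemma summable_on_mass_product: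
  assumes "f \<in> weighted_l2" "h \<in> l2" "\<And>n. norm (x n) \<le> norm (f n)" "\<And>n. norm (y n) \<le> norm (h n)"
  shows "(\<lambda>n. complex_of_real (mass n) * x n * y n) summable_on UNIV"
proof (rule summable_on_weighted_product[OF assms(1,2)])
  show "norm (complex_of_real (mass n) * x n * y n) \<le> weight n * norm (f n) * norm (h n)" for n
    unfolding norm_mult norm_of_real
    using abs_mass_le_weight[of n] assms(3,4)[of n] by (intro mult_mono) auto
qed

section \<open>The free operator as a perturbation\<close>

definition Dfree :: "vec \<Rightarrow> vec" where
  "Dfree f = (\<lambda>n. (grad d (\<lambda>m. snd (f m)) n, grad_adj d (\<lambda>m. fst (f m)) n))"

lemma Dlam_eq_Dfree_plus_mass:
  "Dlam d c lam f n = Dfree f n + (complex_of_real (mass n) * fst (f n), - (complex_of_real (mass n) * snd (f n)))"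
  by (simp add: Dlam_apply Dfree_def)

lemma norm_grad_le:
  "cmod (grad d v n) \<le> (weight n * cmod (v n) + weight (n - 1) * cmod (v (n - 1))) / 8"
proof -
  have "cmod (grad d v n) = cmod (v n - v (n - 1)) / delta d n"
    using delta_pos[of n] by (simp add: grad_def norm_divide norm_mult)
  also have "\<dots> \<le> cmod (v n) / delta d n + cmod (v (n - 1)) / delta d (n - 1 + 1)"
    using delta_pos[of n] by (simp add: add_divide_distrib[symmetric] divide_right_mono norm_triangle_ineq4)
  also have "\<dots> \<le> weight n * cmod (v n) / 8 + weight (n - 1) * cmod (v (n - 1)) / 8"
    by (intro add_mono div_delta_le_weight norm_ge_zero)
  finally show ?thesis by simp
qed

lemma norm_grad_adj_le:
  "cmod (grad_adj d u n) \<le> (weight n * cmod (u n) + weight (n + 1) * cmod (u (n + 1))) / 8"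
proof -
  have "cmod (grad_adj d u n) \<le> cmod (u n / delta d n) + cmod (u (n + 1) / delta d (n + 1))"
    unfolding grad_adj_def norm_mult by (simp add: norm_triangle_ineq4)
  also have "\<dots> = cmod (u n) / delta d n + cmod (u (n + 1)) / delta d (n + 1)"
    using delta_pos[of n] delta_pos[of "n + 1"] by (simp add: norm_divide)
  also have "\<dots> \<le> weight n * cmod (u n) / 8 + weight (n + 1) * cmod (u (n + 1)) / 8"
    by (intro add_mono div_delta_le_weight norm_ge_zero)
  finally show ?thesis by simp
qed

lemma sqnorm_Dfree_le:
  "sqnorm (Dfree f) n \<le> (weighted_sqnorm f n + weighted_sqnorm f (n - 1) + weighted_sqnorm f (n + 1)) / 32"
proof -
  have sq: "x\<^sup>2 \<le> (a\<^sup>2 + b\<^sup>2) / 32" if "0 \<le> x" "x \<le> (a + b) / 8" for x a b :: real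
  proof -
    have "x\<^sup>2 \<le> ((a + b) / 8)\<^sup>2" using that by (intro power_mono)
    also have "\<dots> \<le> (a\<^sup>2 + b\<^sup>2) / 32"
      using sum_squares_bound[of a b] by (simp add: power2_sum power_divide)
    finally show ?thesis .
  qed
  have "sqnorm (Dfree f) n = (cmod (grad d (\<lambda>m. snd (f m)) n))\<^sup>2 + (cmod (grad_adj d (\<lambda>m. fst (f m)) n))\<^sup>2"
    by (simp add: sqnorm_def Dfree_def)
  also have "\<dots> \<le> ((weight n * cmod (snd (f n)))\<^sup>2 + (weight (n - 1) * cmod (snd (f (n - 1))))\<^sup>2) / 32
                 + ((weight n * cmod (fst (f n)))\<^sup>2 + (weight (n + 1) * cmod (fst (f (n + 1))))\<^sup>2) / 32"
    by (intro add_mono sq norm_ge_zero norm_grad_le norm_grad_adj_le)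
  also have "\<dots> \<le> (weighted_sqnorm f n + weighted_sqnorm f (n - 1) + weighted_sqnorm f (n + 1)) / 32"
    unfolding weighted_sqnorm_eq add_divide_distrib
    using zero_le_power2[of "weight (n - 1) * cmod (fst (f (n - 1)))"]
      zero_le_power2[of "weight (n + 1) * cmod (snd (f (n + 1)))"] by linarith
  finally show ?thesis .
qed

lemma Dfree_bound:
  assumes "f \<in> weighted_l2"
  shows "Dfree f \<in> l2" "l2norm_sq (Dfree f) \<le> 3 / 32 * (\<Sum>\<^sub>\<infinity>n. weighted_sqnorm f n)"
proof -
  let ?N = "\<lambda>n. weighted_sqnorm f n + weighted_sqnorm f (n - 1) + weighted_sqnorm f (n + 1)"
  have s: "weighted_sqnorm f summable_on UNIV" using assms by (simp add: weighted_l2_def)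
  have sN: "(\<lambda>n. ?N n / 32) summable_on UNIV"
    using summable_on_cmult_right[OF summable_on_neighbours(1)[OF s], of "1/32"] by simp
  show l: "Dfree f \<in> l2"
    unfolding l2_iff_sqnorm_summable by (rule summable_on_comparison_test[OF sN sqnorm_Dfree_le]) simp
  have "l2norm_sq (Dfree f) \<le> (\<Sum>\<^sub>\<infinity>n. ?N n / 32)"
    unfolding l2norm_sq_def using l sN sqnorm_Dfree_le
    by (intro infsum_mono) (auto simp: l2_iff_sqnorm_summable)
  also have "\<dots> = 3 / 32 * (\<Sum>\<^sub>\<infinity>n. weighted_sqnorm f n)"
    using infsum_cmult_right[of "1/32" ?N UNIV] summable_on_neighbours[OF s] by simp
  finally show "l2norm_sq (Dfree f) \<le> 3 / 32 * (\<Sum>\<^sub>\<infinity>n. weighted_sqnorm f n)" .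
qed

lemma Dlam_in_l2:
  assumes "f \<in> weighted_l2"
  shows "Dlam d c lam f \<in> l2"
proof -
  let ?M = "\<lambda>n. (complex_of_real (mass n) * fst (f n), - (complex_of_real (mass n) * snd (f n)))"
  have mass_part: "(norm (?M n))\<^sup>2 \<le> weighted_sqnorm f n" for n
  proof -
    have "(norm (?M n))\<^sup>2 = (mass n)\<^sup>2 * sqnorm f n"
      by (simp add: norm_Pair sqnorm_def norm_mult power_mult_distrib algebra_simps)
    also have "\<dots> \<le> (weight n)\<^sup>2 * sqnorm f n"
      using power_mono[OF abs_mass_le_weight[of n], of 2] by (intro mult_right_mono) simp_all
    finally show ?thesis by (simp add: weighted_sqnorm_def)
  qed
  have bound: "sqnorm (Dlam d c lam f) n \<le> 2 * sqnorm (Dfree f) n + 2 * weighted_sqnorm f n" for n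
  proof -
    have "sqnorm (Dlam d c lam f) n = (norm (Dfree f n + ?M n))\<^sup>2"
      by (simp only: sqnorm_eq_norm Dlam_eq_Dfree_plus_mass)
    also have "\<dots> \<le> 2 * (norm (Dfree f n))\<^sup>2 + 2 * (norm (?M n))\<^sup>2"
      by (rule power2_norm_add_le)
    also have "\<dots> \<le> 2 * sqnorm (Dfree f) n + 2 * weighted_sqnorm f n"
      using mass_part[of n] by (simp add: sqnorm_eq_norm)
    finally show ?thesis .
  qed
  have "(\<lambda>n. 2 * sqnorm (Dfree f) n + 2 * weighted_sqnorm f n) summable_on UNIV"
    using Dfree_bound(1)[OF assms] assms
    by (intro summable_on_add summable_on_cmult_right) (auto simp: l2_iff_sqnorm_summable weighted_l2_def)
  then show ?thesis
    unfolding l2_iff_sqnorm_summable by (rule summable_on_comparison_test[OF _ bound]) simp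
qed

lemma weighted_l2_subset_Dlam_dom: "weighted_l2 \<subseteq> Dlam_dom d c lam"
  by (auto simp: Dlam_dom_def weighted_l2_subset_l2 Dlam_in_l2)

lemma Dfree_vsub: "Dfree (vsub f g) n = Dfree f n - Dfree g n"
  using delta_pos[of n] delta_pos[of "n + 1"]
  by (simp add: Dfree_def grad_def grad_adj_def vsub_def prod_eq_iff field_simps)

lemma Dlam_vsub: "Dlam d c lam (vsub f g) n = Dlam d c lam f n - Dlam d c lam g n"
  by (simp add: Dlam_eq_Dfree_plus_mass Dfree_vsub vsub_apply algebra_simps)

lemma Dfree_tendsto:
  assumes "\<And>m. (\<lambda>k. F k m) \<longlonglongrightarrow> f m"
  shows "(\<lambda>k. Dfree (F k) n) \<longlonglongrightarrow> Dfree f n"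
  unfolding Dfree_def grad_def grad_adj_def
  using delta_pos[of n] delta_pos[of "n + 1"] by (auto intro!: tendsto_intros assms)

section \<open>Solving \<open>(Dlam - \<i> s) g = u\<close>\<close>

text \<open>\<open>mass_resolvent s\<close> inverts multiplication by \<open>mass \<sigma>\<^sub>3 - \<i> s\<close>; for \<open>s\<^sup>2 = mu\<^sup>2\<close> its symbol has
  modulus exactly \<open>weight\<close>, so it turns \<open>l2\<close> bounds into weighted bounds.\<close>
definition mass_resolvent :: "real \<Rightarrow> vec \<Rightarrow> vec" where
  "mass_resolvent s g = (\<lambda>n.
     (fst (g n) / (complex_of_real (mass n) - \<i> * complex_of_real s),
      snd (g n) / (- complex_of_real (mass n) - \<i> * complex_of_real s)))"

lemma norm_mass_shift:
  assumes "s\<^sup>2 = mu\<^sup>2"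
  shows "cmod (complex_of_real (mass n) - \<i> * complex_of_real s) = weight n"
    and "cmod (- complex_of_real (mass n) - \<i> * complex_of_real s) = weight n"
  using assms weight_pos[of n]
  by (simp_all add: cmod_def weight_def)

lemma mass_shift_nonzero:
  assumes "s\<^sup>2 = mu\<^sup>2"
  shows "complex_of_real (mass n) - \<i> * complex_of_real s \<noteq> 0"
    and "- complex_of_real (mass n) - \<i> * complex_of_real s \<noteq> 0"
  using norm_mass_shift[OF assms, of n] weight_pos[of n] by auto

lemma weighted_sqnorm_mass_resolvent:
  assumes "s\<^sup>2 = mu\<^sup>2"
  shows "weighted_sqnorm (mass_resolvent s g) n = sqnorm g n"
  using norm_mass_shift[OF assms, of n] weight_pos[of n]
  by (simp add: weighted_sqnorm_def sqnorm_def mass_resolvent_def norm_divide power_divide field_simps)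

lemma mass_resolvent_vsub: "vsub (mass_resolvent s f) (mass_resolvent s g) = mass_resolvent s (vsub f g)"
  by (simp add: mass_resolvent_def vsub_def diff_divide_distrib)

lemma Dlam_shift_eq_of_fixed_point:
  assumes s: "s\<^sup>2 = mu\<^sup>2" and g: "g = mass_resolvent s (vsub u (Dfree g))"
  shows "vsub (Dlam d c lam g) (vscale (\<i> * complex_of_real s) g) = u"
proof (rule ext)
  fix n
  have "fst (g n) * (complex_of_real (mass n) - \<i> * complex_of_real s) = fst (u n) - fst (Dfree g n)"
    and "snd (g n) * (- complex_of_real (mass n) - \<i> * complex_of_real s) = snd (u n) - snd (Dfree g n)"
    using mass_shift_nonzero[OF s, of n] fun_cong[OF g, of n]
    by (simp_all add: mass_resolvent_def vsub_def)
  then show "vsub (Dlam d c lam g) (vscale (\<i> * complex_of_real s) g) n = u n"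
    by (simp add: vsub_def vscale_def Dlam_eq_Dfree_plus_mass prod_eq_iff algebra_simps)
qed

text \<open>It contracts the weighted norm because \<open>Dfree\<close> has relative bound
  \<open>sqrt (3 / 32)\<close>.\<close>
primrec resolvent_iter :: "real \<Rightarrow> vec \<Rightarrow> nat \<Rightarrow> vec" where
  "resolvent_iter s u 0 = (\<lambda>n. (0, 0))"
| "resolvent_iter s u (Suc k) = mass_resolvent s (vsub u (Dfree (resolvent_iter s u k)))"

lemma resolvent_iter_bound:
  assumes s: "s\<^sup>2 = mu\<^sup>2" and u: "u \<in> l2"
  shows "resolvent_iter s u k \<in> weighted_l2
    \<and> (\<Sum>\<^sub>\<infinity>n. weighted_sqnorm (resolvent_iter s u k) n) \<le> 4 * l2norm_sq u"
proof (induction k)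
  case 0
  have "weighted_sqnorm (resolvent_iter s u 0) = (\<lambda>n. 0)"
    by (simp add: weighted_sqnorm_def sqnorm_def fun_eq_iff)
  then show ?case using l2norm_sq_nonneg[of u] by (simp add: weighted_l2_def)
next
  case (Suc k)
  let ?g = "resolvent_iter s u k" and ?g' = "resolvent_iter s u (Suc k)"
  have g: "?g \<in> weighted_l2" and g_bound: "(\<Sum>\<^sub>\<infinity>n. weighted_sqnorm ?g n) \<le> 4 * l2norm_sq u"
    using Suc by auto
  have su: "sqnorm u summable_on UNIV" using u by (simp add: l2_iff_sqnorm_summable)
  have sD: "sqnorm (Dfree ?g) summable_on UNIV"
    using Dfree_bound(1)[OF g] by (simp add: l2_iff_sqnorm_summable)
  have le: "weighted_sqnorm ?g' n \<le> 2 * sqnorm u n + 2 * sqnorm (Dfree ?g) n" for n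
    using power2_norm_diff_le[of "u n" "Dfree ?g n"]
    by (simp add: weighted_sqnorm_mass_resolvent[OF s] sqnorm_eq_norm vsub_apply)
  have s2: "(\<lambda>n. 2 * sqnorm u n + 2 * sqnorm (Dfree ?g) n) summable_on UNIV"
    by (intro summable_on_add summable_on_cmult_right su sD)
  have sg': "weighted_sqnorm ?g' summable_on UNIV"
    by (rule summable_on_comparison_test[OF s2 le]) simp
  have "(\<Sum>\<^sub>\<infinity>n. weighted_sqnorm ?g' n) \<le> (\<Sum>\<^sub>\<infinity>n. 2 * sqnorm u n + 2 * sqnorm (Dfree ?g) n)"
    by (rule infsum_mono[OF sg' s2 le])
  also have "\<dots> = 2 * l2norm_sq u + 2 * l2norm_sq (Dfree ?g)"
    unfolding l2norm_sq_def by (simp add: infsum_add infsum_cmult_right su sD summable_on_cmult_right)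
  also have "\<dots> \<le> 4 * l2norm_sq u"
    using Dfree_bound(2)[OF g] g_bound l2norm_sq_nonneg[of u] by linarith
  finally show ?case using sg' by (simp add: weighted_l2_def)
qed

definition resolvent_step :: "real \<Rightarrow> vec \<Rightarrow> nat \<Rightarrow> vec" where
  "resolvent_step s u k = vsub (resolvent_iter s u (Suc k)) (resolvent_iter s u k)"

lemma resolvent_step_weighted_l2:
  assumes "s\<^sup>2 = mu\<^sup>2" "u \<in> l2"
  shows "resolvent_step s u k \<in> weighted_l2"
  unfolding resolvent_step_def using resolvent_iter_bound[OF assms] by (blast intro: weighted_l2_vsub)

lemma resolvent_step_decay:
  assumes s: "s\<^sup>2 = mu\<^sup>2" and u: "u \<in> l2"
  shows "(\<Sum>\<^sub>\<infinity>n. weighted_sqnorm (resolvent_step s u k) n)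
    \<le> (3/32)^k * (\<Sum>\<^sub>\<infinity>n. weighted_sqnorm (resolvent_step s u 0) n)"
proof (induction k)
  case (Suc k)
  have "weighted_sqnorm (resolvent_step s u (Suc k)) n = sqnorm (Dfree (resolvent_step s u k)) n" for n
    by (simp add: resolvent_step_def mass_resolvent_vsub weighted_sqnorm_mass_resolvent[OF s]
        sqnorm_eq_norm vsub_apply Dfree_vsub norm_minus_commute)
  then have "(\<Sum>\<^sub>\<infinity>n. weighted_sqnorm (resolvent_step s u (Suc k)) n) = l2norm_sq (Dfree (resolvent_step s u k))"
    by (simp add: l2norm_sq_def)
  also have "\<dots> \<le> 3 / 32 * (\<Sum>\<^sub>\<infinity>n. weighted_sqnorm (resolvent_step s u k) n)"
    by (rule Dfree_bound(2)[OF resolvent_step_weighted_l2[OF s u]])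
  finally show ?case using Suc by simp
qed simp

lemma norm_resolvent_step_le:
  assumes s: "s\<^sup>2 = mu\<^sup>2" and u: "u \<in> l2"
  defines "C \<equiv> (\<Sum>\<^sub>\<infinity>n. weighted_sqnorm (resolvent_step s u 0) n)"
  shows "norm (resolvent_step s u k n) \<le> sqrt (C / mu\<^sup>2) * sqrt (3/32) ^ k"
proof -
  have "norm (resolvent_step s u k n) \<le> sqrt ((3/32)^k * C / mu\<^sup>2)"
    using norm_le_weighted_bound[OF resolvent_step_weighted_l2[OF s u] resolvent_step_decay[OF s u]]
    by (simp add: C_def)
  also have "\<dots> = sqrt (C / mu\<^sup>2 * (3/32) ^ k)"
    by (rule arg_cong[where f = sqrt]) simp
  also have "\<dots> = sqrt (C / mu\<^sup>2) * sqrt (3/32) ^ k"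
    by (simp only: real_sqrt_mult real_sqrt_power)
  finally show ?thesis .
qed

lemma resolvent_iter_tendsto:
  assumes s: "s\<^sup>2 = mu\<^sup>2" and u: "u \<in> l2"
  shows "(\<lambda>k. resolvent_iter s u k n) \<longlonglongrightarrow> (\<Sum>j. resolvent_step s u j n)"
proof -
  have telescope: "resolvent_iter s u k n = (\<Sum>j<k. resolvent_step s u j n)" for k
    using sum_lessThan_telescope[of "\<lambda>j. resolvent_iter s u j n" k]
    by (simp add: resolvent_step_def vsub_apply zero_prod_def)
  have "summable (\<lambda>j. resolvent_step s u j n)"
  proof (rule summable_comparison_test')
    show "summable (\<lambda>k. sqrt ((\<Sum>\<^sub>\<infinity>n. weighted_sqnorm (resolvent_step s u 0) n) / mu\<^sup>2) * sqrt (3/32) ^ k)"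
      by (intro summable_mult summable_geometric) simp
    show "norm (resolvent_step s u k n)
        \<le> sqrt ((\<Sum>\<^sub>\<infinity>n. weighted_sqnorm (resolvent_step s u 0) n) / mu\<^sup>2) * sqrt (3/32) ^ k" for k
      by (rule norm_resolvent_step_le[OF s u])
  qed
  then show ?thesis unfolding telescope by (rule summable_LIMSEQ)
qed

lemma weighted_l2_pointwise_limit:
  assumes y: "\<And>k. y k \<in> weighted_l2" and y_bound: "\<And>k. (\<Sum>\<^sub>\<infinity>n. weighted_sqnorm (y k) n) \<le> M"
    and lim: "\<And>n. (\<lambda>k. y k n) \<longlonglongrightarrow> g n"
  shows "g \<in> weighted_l2" "(\<Sum>\<^sub>\<infinity>n. weighted_sqnorm g n) \<le> M"
proof -
  have finite_sums: "sum (weighted_sqnorm g) F \<le> M" if "finite F" for F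
  proof (rule LIMSEQ_le_const2)
    show "(\<lambda>k. sum (weighted_sqnorm (y k)) F) \<longlonglongrightarrow> sum (weighted_sqnorm g) F"
      unfolding weighted_sqnorm_def sqnorm_eq_norm by (intro tendsto_intros lim)
    have "sum (weighted_sqnorm (y k)) F \<le> (\<Sum>\<^sub>\<infinity>n. weighted_sqnorm (y k) n)" for k
      using y[of k] that by (intro finite_sum_le_infsum) (auto simp: weighted_l2_def)
    then show "\<exists>N. \<forall>k\<ge>N. sum (weighted_sqnorm (y k)) F \<le> M"
      using y_bound order_trans by blast
  qed
  then have "weighted_sqnorm g summable_on UNIV"
    by (intro nonneg_bdd_above_summable_on bdd_aboveI) auto
  then show "g \<in> weighted_l2" "(\<Sum>\<^sub>\<infinity>n. weighted_sqnorm g n) \<le> M"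
    using finite_sums by (auto simp: weighted_l2_def intro: infsum_le_finite_sums)
qed

lemma resolvent_exists:
  assumes s: "s\<^sup>2 = mu\<^sup>2" and u: "u \<in> l2"
  shows "\<exists>g\<in>weighted_l2. vsub (Dlam d c lam g) (vscale (\<i> * complex_of_real s) g) = u
    \<and> (\<Sum>\<^sub>\<infinity>n. weighted_sqnorm g n) \<le> 4 * l2norm_sq u"
proof -
  define g where "g n = (\<Sum>j. resolvent_step s u j n)" for n
  have lim: "(\<lambda>k. resolvent_iter s u k n) \<longlonglongrightarrow> g n" for n
    unfolding g_def by (rule resolvent_iter_tendsto[OF s u])
  have g: "g \<in> weighted_l2" "(\<Sum>\<^sub>\<infinity>n. weighted_sqnorm g n) \<le> 4 * l2norm_sq u"
    using resolvent_iter_bound[OF s u]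
    by (auto intro: weighted_l2_pointwise_limit[where y = "resolvent_iter s u", OF _ _ lim])
  have "g = mass_resolvent s (vsub u (Dfree g))"
  proof (rule ext, rule LIMSEQ_unique)
    fix n
    show "(\<lambda>k. resolvent_iter s u (Suc k) n) \<longlonglongrightarrow> g n"
      using lim by (rule LIMSEQ_Suc)
    show "(\<lambda>k. resolvent_iter s u (Suc k) n) \<longlonglongrightarrow> mass_resolvent s (vsub u (Dfree g)) n"
      unfolding resolvent_iter.simps mass_resolvent_def vsub_def
      using mass_shift_nonzero[OF s, of n]
      by (intro tendsto_intros Dfree_tendsto lim) auto
  qed
  then show ?thesis using g Dlam_shift_eq_of_fixed_point[OF s] by blast
qed

section \<open>Selfadjointness\<close>

lemma Dlam_symmetric:
  assumes f: "f \<in> weighted_l2" and h: "h \<in> l2"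
  shows "l2inner (Dlam d c lam f) h = l2inner f (Dlam d c lam h)"
proof -
  have h_next: "(\<lambda>n. h (n + 1)) \<in> l2" and h_prev: "(\<lambda>n. h (n - 1)) \<in> l2"
    using l2_shift[OF h, of 1] l2_shift[OF h, of "- 1"] by simp_all
  have fst_le: "norm (fst (x n)) \<le> norm (x n)" and snd_le: "norm (snd (x n)) \<le> norm (x n)" for x :: vec and n
    by (rule norm_fst_le_norm norm_snd_le_norm)+
  note div_delta = summable_on_div_delta[OF f h] summable_on_div_delta[OF f h_next]
    summable_on_div_delta[OF f h_prev]
  note parts1 = grad_summation_by_parts[where v = "\<lambda>m. snd (f m)" and h = "\<lambda>m. fst (h m)"]
  note parts2 = grad_adj_summation_by_parts[where u = "\<lambda>m. fst (f m)" and h = "\<lambda>m. snd (h m)"]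
  have a1: "(\<lambda>n. cnj (snd (f n)) * fst (h n) / complex_of_real (delta d n)) summable_on UNIV"
    and b1: "(\<lambda>n. cnj (snd (f n)) * fst (h (n + 1)) / complex_of_real (delta d (n + 1))) summable_on UNIV"
    and a2: "(\<lambda>n. cnj (fst (f n)) * snd (h n) / complex_of_real (delta d n)) summable_on UNIV"
    and b2: "(\<lambda>n. cnj (fst (f n)) * snd (h (n - 1)) / complex_of_real (delta d n)) summable_on UNIV"
    using div_delta(1)[where x = "\<lambda>n. cnj (snd (f n))" and y = "\<lambda>n. fst (h n)"]
      div_delta(4)[where x = "\<lambda>n. cnj (snd (f n))" and y = "\<lambda>n. fst (h (n + 1))"]
      div_delta(1)[where x = "\<lambda>n. cnj (fst (f n))" and y = "\<lambda>n. snd (h n)"]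
      div_delta(5)[where x = "\<lambda>n. cnj (fst (f n))" and y = "\<lambda>n. snd (h (n - 1))"]
    by (simp_all add: fst_le snd_le)
  define M where "M n = complex_of_real (mass n) * cnj (fst (f n)) * fst (h n)
    + complex_of_real (mass n) * (- cnj (snd (f n))) * snd (h n)" for n
  have sM: "M summable_on UNIV"
    unfolding M_def
    by (intro summable_on_add summable_on_mass_product[OF f h]) (simp_all add: fst_le snd_le)
  have "l2inner (Dlam d c lam f) h
      = (\<Sum>\<^sub>\<infinity>n. (cnj (grad d (\<lambda>m. snd (f m)) n) * fst (h n)
                 + cnj (grad_adj d (\<lambda>m. fst (f m)) n) * snd (h n)) + M n)"
    unfolding l2inner_def by (rule infsum_cong) (simp add: Dlam_apply M_def algebra_simps)
  also have "\<dots> = (\<Sum>\<^sub>\<infinity>n. cnj (grad d (\<lambda>m. snd (f m)) n) * fst (h n))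
      + (\<Sum>\<^sub>\<infinity>n. cnj (grad_adj d (\<lambda>m. fst (f m)) n) * snd (h n)) + (\<Sum>\<^sub>\<infinity>n. M n)"
    using parts1(1)[OF a1 b1] parts2(1)[OF a2 b2] sM by (simp add: infsum_add summable_on_add)
  also have "\<dots> = (\<Sum>\<^sub>\<infinity>n. cnj (snd (f n)) * grad_adj d (\<lambda>m. fst (h m)) n)
      + (\<Sum>\<^sub>\<infinity>n. cnj (fst (f n)) * grad d (\<lambda>m. snd (h m)) n) + (\<Sum>\<^sub>\<infinity>n. M n)"
    using parts1(3)[OF a1 b1] parts2(3)[OF a2 b2] by simp
  also have "\<dots> = (\<Sum>\<^sub>\<infinity>n. (cnj (snd (f n)) * grad_adj d (\<lambda>m. fst (h m)) n
                 + cnj (fst (f n)) * grad d (\<lambda>m. snd (h m)) n) + M n)"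
    using parts1(2)[OF a1 b1] parts2(2)[OF a2 b2] sM by (simp add: infsum_add summable_on_add)
  also have "\<dots> = l2inner f (Dlam d c lam h)"
    unfolding l2inner_def by (rule infsum_cong) (simp add: Dlam_apply M_def algebra_simps)
  finally show ?thesis .
qed

text \<open>An eigenvector for \<open>\<i> s\<close> is orthogonal to the range of \<open>Dlam + \<i> s\<close>, which is all of
  \<open>l2\<close> by \<open>resolvent_exists\<close>.\<close>
lemma Dlam_eigenvector_zero:
  assumes s: "s\<^sup>2 = mu\<^sup>2" and h: "h \<in> l2"
    and eigen: "Dlam d c lam h = vscale (\<i> * complex_of_real s) h"
  shows "h = (\<lambda>n. (0, 0))"
proof -
  obtain g where g: "g \<in> weighted_l2"
    and eq: "vsub (Dlam d c lam g) (vscale (\<i> * complex_of_real (- s)) g) = h"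
    using resolvent_exists[of "- s" h] s h by auto
  define X where "X n = cnj (fst (h n)) * fst (h n) + cnj (snd (h n)) * snd (h n)" for n
  define Y where "Y n = cnj (fst (g n)) * fst (h n) + cnj (snd (g n)) * snd (h n)" for n
  have sX: "X summable_on UNIV" unfolding X_def by (rule summable_l2inner[OF h h])
  have sY: "Y summable_on UNIV" unfolding Y_def by (rule summable_l2inner[OF weighted_l2_subset_l2[OF g] h])
  have Dlam_g: "Dlam d c lam g n = h n + vscale (\<i> * complex_of_real (- s)) g n" for n
    by (simp add: vsub_apply flip: fun_cong[OF eq, of n])
  have "l2inner (Dlam d c lam g) h = (\<Sum>\<^sub>\<infinity>n. X n + (\<i> * complex_of_real s) * Y n)"
    unfolding l2inner_def by (rule infsum_cong) (simp add: Dlam_g vscale_def X_def Y_def algebra_simps)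
  also have "\<dots> = infsum X UNIV + (\<i> * complex_of_real s) * infsum Y UNIV"
    using sX sY by (simp add: infsum_add summable_on_cmult_right infsum_cmult_right)
  finally have lhs: "l2inner (Dlam d c lam g) h = infsum X UNIV + (\<i> * complex_of_real s) * infsum Y UNIV" .
  have "l2inner g (Dlam d c lam h) = (\<Sum>\<^sub>\<infinity>n. (\<i> * complex_of_real s) * Y n)"
    unfolding l2inner_def eigen by (rule infsum_cong) (simp add: vscale_def Y_def algebra_simps)
  also have "\<dots> = (\<i> * complex_of_real s) * infsum Y UNIV"
    using sY by (simp add: infsum_cmult_right)
  finally have "infsum X UNIV = 0" using lhs Dlam_symmetric[OF g h] by simp
  moreover have "infsum X UNIV = complex_of_real (l2norm_sq h)"
    using l2inner_self[OF h] unfolding X_def by (simp only: l2inner_def)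
  ultimately have "l2norm_sq h = 0" by simp
  then have "sqnorm h n = 0" for n
    using h by (intro nonneg_infsum_le_0D[where A = UNIV]) (auto simp: l2norm_sq_def l2_iff_sqnorm_summable)
  then show ?thesis by (auto simp: sqnorm_def prod_eq_iff)
qed

lemma Dlam_shift_injective:
  assumes s: "s\<^sup>2 = mu\<^sup>2" and f: "f \<in> l2" and g: "g \<in> l2"
    and eq: "vsub (Dlam d c lam f) (vscale (\<i> * complex_of_real s) f)
           = vsub (Dlam d c lam g) (vscale (\<i> * complex_of_real s) g)"
  shows "f = g"
proof -
  let ?z = "\<i> * complex_of_real s"
  have "Dlam d c lam (vsub f g) n = vscale ?z (vsub f g) n" for n
  proof -
    have "Dlam d c lam f n - vscale ?z f n = Dlam d c lam g n - vscale ?z g n"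
      using fun_cong[OF eq, of n] by (simp add: vsub_apply)
    then have "Dlam d c lam f n - Dlam d c lam g n = vscale ?z f n - vscale ?z g n"
      by (simp add: algebra_simps)
    then show ?thesis by (simp only: Dlam_vsub) (simp add: vscale_def vsub_def right_diff_distrib)
  qed
  then have "vsub f g = (\<lambda>n. (0, 0))"
    by (intro Dlam_eigenvector_zero[OF s l2_vsub[OF f g]]) auto
  then show ?thesis by (auto simp: fun_eq_iff vsub_def prod_eq_iff dest: fun_cong)
qed

lemma Dlam_dom_eq_weighted_l2: "Dlam_dom d c lam = weighted_l2"
proof
  show "weighted_l2 \<subseteq> Dlam_dom d c lam" by (rule weighted_l2_subset_Dlam_dom)
  show "Dlam_dom d c lam \<subseteq> weighted_l2"
  proof
    fix f assume "f \<in> Dlam_dom d c lam"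
    then have f: "f \<in> l2" and Df: "Dlam d c lam f \<in> l2" by (auto simp: Dlam_dom_def)
    define u where "u = vsub (Dlam d c lam f) (vscale (\<i> * complex_of_real mu) f)"
    have "u \<in> l2" unfolding u_def by (intro l2_vsub l2_vscale Df f)
    then obtain g where g: "g \<in> weighted_l2"
      and eq: "vsub (Dlam d c lam g) (vscale (\<i> * complex_of_real mu) g) = u"
      using resolvent_exists[of mu] by auto
    have "f = g"
      using eq by (intro Dlam_shift_injective[of mu, OF _ f weighted_l2_subset_l2[OF g]]) (simp_all add: u_def)
    then show "f \<in> weighted_l2" using g by simp
  qed
qed

lemma weighted_l2_dense:
  assumes g: "g \<in> l2" and e: "e > 0"
  shows "\<exists>f\<in>weighted_l2. l2norm (vsub g f) < e"
proof -
  have s: "sqnorm g summable_on UNIV" using g by (simp add: l2_iff_sqnorm_summable)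
  obtain F where F: "finite F" "dist (sum (sqnorm g) F) (l2norm_sq g) \<le> e\<^sup>2 / 2"
    using infsum_finite_approximation[OF s, of "e\<^sup>2 / 2"] e by (auto simp: l2norm_sq_def)
  define t where "t n = (if n \<in> F then g n else (0, 0))" for n
  have t: "t \<in> weighted_l2" by (rule weighted_l2_finite_support[OF F(1)]) (simp add: t_def)
  have sF: "(\<lambda>n. if n \<in> F then sqnorm g n else 0) summable_on UNIV"
    by (rule summable_on_finite_support[OF F(1)]) simp
  have "sqnorm (vsub g t) n = sqnorm g n + - (if n \<in> F then sqnorm g n else 0)" for n
    by (cases "n \<in> F") (simp_all add: t_def vsub_apply sqnorm_eq_norm zero_prod_def[symmetric])
  then have "l2norm_sq (vsub g t) = l2norm_sq g - sum (sqnorm g) F"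
    using infsum_add[OF s summable_on_uminus[THEN iffD2, OF sF]]
      infsum_uminus[of "\<lambda>n. if n \<in> F then sqnorm g n else 0" UNIV]
      infsum_finite_support[OF F(1), of "sqnorm g"]
    by (simp add: l2norm_sq_def)
  then have "l2norm_sq (vsub g t) \<le> e\<^sup>2 / 2"
    using F(2) abs_le_iff[of "sum (sqnorm g) F - l2norm_sq g"] unfolding dist_real_def by linarith
  then have "l2norm (vsub g t) \<le> sqrt (e\<^sup>2 / 2)" by (simp add: l2norm_eq_sqrt)
  also have "\<dots> < sqrt (e\<^sup>2)" using e by (intro real_sqrt_less_mono) simp
  also have "\<dots> = e" using e by simp
  finally show ?thesis using t by blast
qed

lemma Dlam_selfadjoint: "selfadjoint_op (Dlam_dom d c lam) (Dlam d c lam)"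
  unfolding selfadjoint_op_def Dlam_dom_eq_weighted_l2
proof (intro conjI ballI allI impI)
  show "weighted_l2 \<subseteq> l2" using weighted_l2_subset_l2 by blast
  show "Dlam d c lam f \<in> l2" if "f \<in> weighted_l2" for f using that by (rule Dlam_in_l2)
  show "\<exists>f\<in>weighted_l2. l2norm (vsub g f) < e" if "g \<in> l2" "0 < e" for g e
    using that by (rule weighted_l2_dense)
  show "l2inner (Dlam d c lam f) g = l2inner f (Dlam d c lam g)" if "f \<in> weighted_l2" "g \<in> weighted_l2" for f g
    using that by (simp add: Dlam_symmetric weighted_l2_subset_l2)
next
  fix g assume g: "g \<in> l2"
  show "(\<exists>h\<in>l2. \<forall>f\<in>weighted_l2. l2inner (Dlam d c lam f) g = l2inner f h) \<longleftrightarrow> g \<in> weighted_l2"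
  proof
    assume "\<exists>h\<in>l2. \<forall>f\<in>weighted_l2. l2inner (Dlam d c lam f) g = l2inner f h"
    then obtain h where h: "h \<in> l2"
      and adj: "\<And>f. f \<in> weighted_l2 \<Longrightarrow> l2inner (Dlam d c lam f) g = l2inner f h" by blast
    text \<open>Testing against unit vectors identifies \<open>h\<close> with \<open>Dlam g\<close>.\<close>
    have "Dlam d c lam g n = h n" for n
    proof -
      define e1 where "e1 = (\<lambda>m. if m = n then (1::complex, 0::complex) else (0, 0))"
      define e2 where "e2 = (\<lambda>m. if m = n then (0::complex, 1::complex) else (0, 0))"
      have e1: "e1 \<in> weighted_l2" and e2: "e2 \<in> weighted_l2"
        by (rule weighted_l2_finite_support[of "{n}"], simp_all add: e1_def e2_def)+
      have "fst (Dlam d c lam g n) = fst (h n)"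
        using Dlam_symmetric[OF e1 g] adj[OF e1] l2inner_unit_fst[of n] by (simp add: e1_def)
      moreover have "snd (Dlam d c lam g n) = snd (h n)"
        using Dlam_symmetric[OF e2 g] adj[OF e2] l2inner_unit_snd[of n] by (simp add: e2_def)
      ultimately show ?thesis by (simp add: prod_eq_iff)
    qed
    then have "Dlam d c lam g = h" by blast
    then have "g \<in> Dlam_dom d c lam" using g h by (simp add: Dlam_dom_def)
    then show "g \<in> weighted_l2" by (simp add: Dlam_dom_eq_weighted_l2)
  qed (use Dlam_in_l2 Dlam_symmetric[OF _ g] in blast)
qed

section \<open>Compactness of the resolvent\<close>

lemma finite_weight_sublevel: "finite {n. (weight n)\<^sup>2 < K}"
proof (rule finite_subset)
  show "{n. (weight n)\<^sup>2 < K} \<subseteq> {n. c n < sqrt K / 8}"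
  proof
    fix n assume "n \<in> {n. (weight n)\<^sup>2 < K}"
    then have "weight n < sqrt K" by (simp add: real_less_rsqrt)
    then show "n \<in> {n. c n < sqrt K / 8}" using c_le_weight[of n] by simp
  qed
qed (rule finite_c_less)

lemma l2norm_sq_le_finite_part:
  assumes f: "f \<in> weighted_l2" and M: "(\<Sum>\<^sub>\<infinity>n. weighted_sqnorm f n) \<le> M" and K: "K > 0"
  shows "l2norm_sq f \<le> sum (sqnorm f) {n. (weight n)\<^sup>2 < K} + M / K"
proof -
  define F where "F = {n. (weight n)\<^sup>2 < K}"
  have F: "finite F" unfolding F_def by (rule finite_weight_sublevel)
  have sf: "sqnorm f summable_on UNIV"
    using weighted_l2_subset_l2[OF f] by (simp add: l2_iff_sqnorm_summable)
  have sw: "weighted_sqnorm f summable_on UNIV" using f by (simp add: weighted_l2_def)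
  have sF: "(\<lambda>n. if n \<in> F then sqnorm f n else 0) summable_on UNIV"
    by (rule summable_on_finite_support[OF F]) simp
  have pointwise: "sqnorm f n \<le> (if n \<in> F then sqnorm f n else 0) + (1 / K) * weighted_sqnorm f n" for n
  proof (cases "n \<in> F")
    case False
    then have "K * sqnorm f n \<le> weighted_sqnorm f n"
      unfolding F_def weighted_sqnorm_def by (intro mult_right_mono) auto
    then show ?thesis using False K by (simp add: field_simps)
  qed (use K in simp)
  have "l2norm_sq f \<le> (\<Sum>\<^sub>\<infinity>n. (if n \<in> F then sqnorm f n else 0) + (1 / K) * weighted_sqnorm f n)"
    unfolding l2norm_sq_def
    by (rule infsum_mono[OF sf summable_on_add[OF sF summable_on_cmult_right[OF sw]] pointwise])
  also have "\<dots> = sum (sqnorm f) F + (1 / K) * (\<Sum>\<^sub>\<infinity>n. weighted_sqnorm f n)"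
    unfolding infsum_add[OF sF summable_on_cmult_right[OF sw]] infsum_finite_support[OF F]
    by (simp only: infsum_cmult_right[OF sw])
  also have "\<dots> \<le> sum (sqnorm f) F + M / K"
    using M K by (simp add: divide_right_mono)
  finally show ?thesis unfolding F_def .
qed

lemma weighted_bounded_convergent_subseq:
  fixes y :: "nat \<Rightarrow> vec"
  assumes y: "\<And>k. y k \<in> weighted_l2" and y_bound: "\<And>k. (\<Sum>\<^sub>\<infinity>n. weighted_sqnorm (y k) n) \<le> M"
  shows "\<exists>r g. strict_mono r \<and> g \<in> weighted_l2 \<and> (\<lambda>k. l2norm_sq (vsub (y (r k)) g)) \<longlonglongrightarrow> 0"
proof -
  obtain r g where r: "strict_mono r" and lim: "\<And>n. (\<lambda>k. y (r k) n) \<longlonglongrightarrow> g n"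
    using pointwise_convergent_subseq[of y "\<lambda>n. sqrt (M / mu\<^sup>2)"] norm_le_weighted_bound[OF y y_bound]
    by blast
  have g: "g \<in> weighted_l2" "(\<Sum>\<^sub>\<infinity>n. weighted_sqnorm g n) \<le> M"
    using weighted_l2_pointwise_limit[where y = "\<lambda>k. y (r k)", OF y y_bound lim] by auto
  have M: "0 \<le> M" using y_bound[of 0] infsum_nonneg[of UNIV "weighted_sqnorm (y 0)"] by simp
  define z where "z k = vsub (y (r k)) g" for k
  have z: "z k \<in> weighted_l2" and z_bound: "(\<Sum>\<^sub>\<infinity>n. weighted_sqnorm (z k) n) \<le> 4 * M" for k
    using weighted_l2_vsub[OF y g(1), of "r k"] infsum_weighted_sqnorm_vsub_le[OF y g(1), of "r k"]
      y_bound[of "r k"] g(2)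
    by (auto simp: z_def)
  have "(\<lambda>k. l2norm_sq (z k)) \<longlonglongrightarrow> 0"
  proof (rule LIMSEQ_I)
    fix \<epsilon> :: real assume \<epsilon>: "0 < \<epsilon>"
    define K where "K = 8 * (M + 1) / \<epsilon>"
    have K: "K > 0" using \<epsilon> M by (simp add: K_def)
    have "(\<lambda>k. sqnorm (z k) n) \<longlonglongrightarrow> 0" for n
    proof -
      have "(\<lambda>k. (norm (y (r k) n - g n))\<^sup>2) \<longlonglongrightarrow> (norm (g n - g n))\<^sup>2"
        by (intro tendsto_intros lim)
      then show ?thesis by (simp add: z_def sqnorm_eq_norm vsub_apply)
    qed
    then have "(\<lambda>k. sum (sqnorm (z k)) {n. (weight n)\<^sup>2 < K}) \<longlonglongrightarrow> 0"
      by (rule tendsto_null_sum)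
    then obtain N where N: "\<And>k. k \<ge> N \<Longrightarrow> sum (sqnorm (z k)) {n. (weight n)\<^sup>2 < K} < \<epsilon> / 2"
      using LIMSEQ_D[of _ 0 "\<epsilon> / 2"] \<epsilon> by (force simp: abs_less_iff)
    have "4 * M / K < \<epsilon> / 2" using \<epsilon> M by (simp add: K_def field_simps)
    then have "l2norm_sq (z k) < \<epsilon>" if "k \<ge> N" for k
      using l2norm_sq_le_finite_part[OF z z_bound K, of k] N[OF that] by linarith
    then show "\<exists>N. \<forall>k\<ge>N. norm (l2norm_sq (z k) - 0) < \<epsilon>"
      using l2norm_sq_nonneg by auto
  qed
  then show ?thesis using r g(1) unfolding z_def by blast
qed

lemma Dlam_compact_resolvent: "compact_resolvent (Dlam_dom d c lam) (Dlam d c lam)"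
proof -
  let ?z = "\<i> * complex_of_real mu"
  define R where "R u = (SOME g. g \<in> weighted_l2 \<and> vsub (Dlam d c lam g) (vscale ?z g) = u
    \<and> (\<Sum>\<^sub>\<infinity>n. weighted_sqnorm g n) \<le> 4 * l2norm_sq u)" for u
  have R: "R u \<in> weighted_l2" "vsub (Dlam d c lam (R u)) (vscale ?z (R u)) = u"
    "(\<Sum>\<^sub>\<infinity>n. weighted_sqnorm (R u) n) \<le> 4 * l2norm_sq u" if "u \<in> l2" for u
    using someI_ex[OF resolvent_exists[of mu u, unfolded Bex_def]] that unfolding R_def by auto
  have "compact_l2op R"
    unfolding compact_l2op_def
  proof (intro allI impI)
    fix x :: "nat \<Rightarrow> vec" assume "(\<forall>k. x k \<in> l2) \<and> (\<exists>B. \<forall>k. l2norm (x k) \<le> B)"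
    then obtain B where x: "\<And>k. x k \<in> l2" and B: "\<And>k. l2norm (x k) \<le> B" by blast
    have "l2norm_sq (x k) \<le> B\<^sup>2" for k
      using power_mono[OF B[of k], of 2] by (simp add: l2norm_eq_sqrt l2norm_sq_nonneg)
    then have "(\<Sum>\<^sub>\<infinity>n. weighted_sqnorm (R (x k)) n) \<le> 4 * B\<^sup>2" for k
      using R(3)[OF x[of k]] by (meson mult_left_mono order_trans zero_le_numeral)
    then obtain r g where r: "strict_mono r" and g: "g \<in> weighted_l2"
      and lim: "(\<lambda>k. l2norm_sq (vsub (R (x (r k))) g)) \<longlonglongrightarrow> 0"
      using weighted_bounded_convergent_subseq[of "\<lambda>k. R (x k)"] R(1)[OF x] by blast
    have "(\<lambda>k. l2norm (vsub (R (x (r k))) g)) \<longlonglongrightarrow> sqrt 0"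
      unfolding l2norm_eq_sqrt by (intro tendsto_real_sqrt lim)
    then show "\<exists>r u. strict_mono r \<and> u \<in> l2 \<and> (\<lambda>k. l2norm (vsub (R (x (r k))) u)) \<longlonglongrightarrow> 0"
      using r weighted_l2_subset_l2[OF g] by auto
  qed
  moreover have "R (vsub (Dlam d c lam f) (vscale ?z f)) = f" if "f \<in> Dlam_dom d c lam" for f
  proof -
    have f: "f \<in> l2" and Df: "Dlam d c lam f \<in> l2" using that by (auto simp: Dlam_dom_def)
    then have "vsub (Dlam d c lam f) (vscale ?z f) \<in> l2" by (intro l2_vsub l2_vscale)
    then show ?thesis
      using R(1,2) by (intro Dlam_shift_injective[of mu, OF _ weighted_l2_subset_l2 f]) auto
  qed
  ultimately show ?thesis
    unfolding compact_resolvent_def Dlam_dom_eq_weighted_l2 using R(1,2) by blast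
qed

end

theorem lemma11:
  fixes d :: "int \<Rightarrow> int \<Rightarrow> real" and c :: "int \<Rightarrow> real" and lam :: real
  assumes metric_eq: "\<And>x y. d x y = 0 \<longleftrightarrow> x = y"
    and metric_sym: "\<And>x y. d x y = d y x"
    and metric_tri: "\<And>x y z. d x z \<le> d x y + d y z"
    and c_top: "filterlim c at_top at_top"
    and c_bot: "filterlim c at_top at_bot"
    and c_delta: "\<And>n. c n * delta d n \<ge> 1"
    and lam: "lam \<noteq> 0"
  shows "selfadjoint_op (Dlam_dom d c lam) (Dlam d c lam)
         \<and> compact_resolvent (Dlam_dom d c lam) (Dlam d c lam)"
proof -
  interpret dirac_setting d c lam
  proof
    show "delta d n > 0" for n by (rule delta_pos_of_metric[OF metric_eq metric_sym metric_tri])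
    show "finite {n. c n < T}" for T by (rule finite_sublevel_int[OF c_top c_bot])
  qed (use c_delta lam in auto)
  show ?thesis using Dlam_selfadjoint Dlam_compact_resolvent by blast
qed

end
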